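(* Let $\mathcal G$ be a topological $2$-group, $X$ a topological space, $\pi\colon P\to\overline X$ a principal $\mathcal G$-bundle and $\mathcal A=\{(U_i,\psi_i,\phi_i,\varepsilon_i)\}_{i\in I}$ an atlas of $\pi$. Then $c_{\mathcal A}=(\mathbf x,\mathbf e)$, defined below, is a $\mathcal G$-valued Čech cocycle subordinate to $\mathcal U=\{U_i\}_{i\in I}$.
   Context: Topological $2$-group $\mathcal G=(\mathcal G_1\rightrightarrows\mathcal G_0)$ (groupoid internal to topological groups; product $g*h$ for $t(g)=s(h)$, equal to $h1_{t(g)^{-1}}g$), $\mathcal E=\mathrm{Ker}(s)$, ${}^xe=1_xe1_{x^{-1}}$; $\overline X=(X\rightrightarrows X)$. A principal $\mathcal G$-bundle is a continuous functor $\pi\colon P\to\overline X$ from a $\mathcal G$-$2$-space (topological groupoid with strict continuous right $\mathcal G$-action) admitting an atlas: a family of trivializing charts $(U_i,\psi_i,\phi_i,\varepsilon_i)$ with $\{U_i\}$ an open cover, $\psi_i\colon P|_{U_i}\to\overline{U_i}\times\mathcal G$ a $\mathcal G$-equivariant continuous functor with $\mathcal G$-pseudo-inverse $\phi_i\colon\overline{U_i}\times\mathcal G\to P|_{U_i}$, $\varepsilon_i\colon\phi_i\psi_i\Rightarrow\mathrm{id}_{P|_{U_i}}$ a $\mathcal G_0$-equivariant continuous natural isomorphism, with $\mathrm{pr}_1\psi_i=\pi|_{U_i}$ and $\pi|_{U_i}\phi_i=\mathrm{pr}_1$. Write $U_{ij}=U_i\cap U_j$, etc. The transition functor $T_{ij}=\psi_i\phi_j\colon\overline{U_{ij}}\times\mathcal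 G\to\overline{U_{ij}}\times\mathcal G$ satisfies $T_{ij}(u,1)=(u,\mathbf x_{ij}(u))$ for a unique continuous $\mathbf x_{ij}\colon U_{ij}\to\mathcal G_0$. For $(u,x)\in U_{ijk}\times\mathcal G_0$, set $\gamma_{ijk}(u,x)=\psi_i(\varepsilon_j(\phi_k(u,x)))$; then there is a unique continuous $\mathbf e_{ijk}\colon U_{ijk}\to\mathcal G_1$ with $\gamma_{ijk}(u,x)=(u,\mathbf e_{ijk}(u)1_{\mathbf x_{ij}(u)\mathbf x_{jk}(u)x})$. A $\mathcal G$-valued Čech cocycle subordinate to $\mathcal U$ is a pair of families of continuous maps $\mathbf x_{ij}\colon U_{ij}\to\mathcal G_0$, $\mathbf e_{ijk}\colon U_{ijk}\to\mathcal E$ with $t(\mathbf e_{ijk})\mathbf x_{ij}\mathbf x_{jk}=\mathbf x_{ik}$ on $U_{ijk}$ and $\mathbf e_{ikl}\mathbf e_{ijk}=\mathbf e_{ijl}\,{}^{\mathbf x_{ij}}\mathbf e_{jkl}$ on $U_{ijkl}$. *)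

theory Defs
  imports "HOL-Analysis.Analysis"
begin

text \<open>A topological groupoid: objects and arrows are topological spaces (carriers are the
topspaces); sr/tg are source and target, un the unit (identity arrow), cp the composition
in diagrammatic order (cp f g defined when tg f = sr g), iv the groupoid inverse.\<close>

record ('p,'q) tgpd =
  obj :: "'p topology"
  arr :: "'q topology"
  sr :: "'q \<Rightarrow> 'p"
  tg :: "'q \<Rightarrow> 'p"
  un :: "'p \<Rightarrow> 'q"
  cp :: "'q \<Rightarrow> 'q \<Rightarrow> 'q"
  iv :: "'q \<Rightarrow> 'q"

definition topgroup :: "'a topology \<Rightarrow> ('a \<Rightarrow> 'a \<Rightarrow> 'a) \<Rightarrow> ('a \<Rightarrow> 'a) \<Rightarrow> 'a \<Rightarrow> bool" where
  "topgroup T m i e \<longleftrightarrow>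
     e \<in> topspace T \<and>
     (\<forall>a\<in>topspace T. \<forall>b\<in>topspace T. m a b \<in> topspace T) \<and>
     (\<forall>a\<in>topspace T. i a \<in> topspace T) \<and>
     (\<forall>a\<in>topspace T. \<forall>b\<in>topspace T. \<forall>c\<in>topspace T. m (m a b) c = m a (m b c)) \<and>
     (\<forall>a\<in>topspace T. m e a = a \<and> m a e = a \<and> m (i a) a = e \<and> m a (i a) = e) \<and>
     continuous_map (prod_topology T T) T (\<lambda>(a,b). m a b) \<and>
     continuous_map T T i"

definition tgroupoid :: "('p,'q,'z) tgpd_scheme \<Rightarrow> bool" where
  "tgroupoid C \<longleftrightarrow>
     continuous_map (arr C) (obj C) (sr C) \<and>
     continuous_map (arr C) (obj C) (tg C) \<and>
     continuous_map (obj C) (arr C) (un C) \<and>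
     continuous_map (arr C) (arr C) (iv C) \<and>
     continuous_map (subtopology (prod_topology (arr C) (arr C)) {(f,g). tg C f = sr C g})
        (arr C) (\<lambda>(f,g). cp C f g) \<and>
     (\<forall>p\<in>topspace (obj C). sr C (un C p) = p \<and> tg C (un C p) = p) \<and>
     (\<forall>f\<in>topspace (arr C). \<forall>g\<in>topspace (arr C). tg C f = sr C g \<longrightarrow>
        sr C (cp C f g) = sr C f \<and> tg C (cp C f g) = tg C g) \<and>
     (\<forall>f\<in>topspace (arr C). \<forall>g\<in>topspace (arr C). \<forall>h\<in>topspace (arr C).
        tg C f = sr C g \<longrightarrow> tg C g = sr C h \<longrightarrow> cp C (cp C f g) h = cp C f (cp C g h)) \<and>
     (\<forall>f\<in>topspace (arr C). cp C (un C (sr C f)) f = f \<and> cp C f (un C (tg C f)) = f) \<and>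
     (\<forall>f\<in>topspace (arr C). sr C (iv C f) = tg C f \<and> tg C (iv C f) = sr C f \<and>
        cp C f (iv C f) = un C (sr C f) \<and> cp C (iv C f) f = un C (tg C f))"

text \<open>A topological 2-group: a groupoid internal to topological groups.
G0 = obj G with (mul0, inv0, one0); G1 = arr G with (mul1, inv1, one1).\<close>

record ('x,'g) tgrp2 = "('x,'g) tgpd" +
  mul0 :: "'x \<Rightarrow> 'x \<Rightarrow> 'x"
  inv0 :: "'x \<Rightarrow> 'x"
  one0 :: "'x"
  mul1 :: "'g \<Rightarrow> 'g \<Rightarrow> 'g"
  inv1 :: "'g \<Rightarrow> 'g"
  one1 :: "'g"

definition two_group :: "('x,'g) tgrp2 \<Rightarrow> bool" where
  "two_group G \<longleftrightarrow>
     tgroupoid G \<and>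
     topgroup (obj G) (mul0 G) (inv0 G) (one0 G) \<and>
     topgroup (arr G) (mul1 G) (inv1 G) (one1 G) \<and>
     (\<forall>g\<in>topspace (arr G). \<forall>h\<in>topspace (arr G).
        sr G (mul1 G g h) = mul0 G (sr G g) (sr G h) \<and>
        tg G (mul1 G g h) = mul0 G (tg G g) (tg G h)) \<and>
     (\<forall>x\<in>topspace (obj G). \<forall>y\<in>topspace (obj G). un G (mul0 G x y) = mul1 G (un G x) (un G y)) \<and>
     (\<forall>f\<in>topspace (arr G). \<forall>g\<in>topspace (arr G). \<forall>f'\<in>topspace (arr G). \<forall>g'\<in>topspace (arr G).
        tg G f = sr G g \<longrightarrow> tg G f' = sr G g' \<longrightarrow>
        cp G (mul1 G f f') (mul1 G g g') = mul1 G (cp G f g) (cp G f' g'))"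

definition kerS :: "('x,'g) tgrp2 \<Rightarrow> 'g set" where
  "kerS G = {g \<in> topspace (arr G). sr G g = one0 G}"

definition conj2 :: "('x,'g) tgrp2 \<Rightarrow> 'x \<Rightarrow> 'g \<Rightarrow> 'g" where
  "conj2 G x e = mul1 G (mul1 G (un G x) e) (un G (inv0 G x))"

text \<open>A G-2-space: a topological groupoid with a strict continuous right G-action
(act0 on objects, act1 on arrows), i.e. a continuous action functor P x G -> P.\<close>

record ('p,'q,'x,'g) gspace = "('p,'q) tgpd" +
  act0 :: "'p \<Rightarrow> 'x \<Rightarrow> 'p"
  act1 :: "'q \<Rightarrow> 'g \<Rightarrow> 'q"

definition g2space :: "('x,'g) tgrp2 \<Rightarrow> ('p,'q,'x,'g) gspace \<Rightarrow> bool" where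
  "g2space G P \<longleftrightarrow>
     tgroupoid P \<and>
     continuous_map (prod_topology (obj P) (obj G)) (obj P) (\<lambda>(p,x). act0 P p x) \<and>
     continuous_map (prod_topology (arr P) (arr G)) (arr P) (\<lambda>(f,g). act1 P f g) \<and>
     (\<forall>p\<in>topspace (obj P). act0 P p (one0 G) = p) \<and>
     (\<forall>p\<in>topspace (obj P). \<forall>x\<in>topspace (obj G). \<forall>y\<in>topspace (obj G).
        act0 P (act0 P p x) y = act0 P p (mul0 G x y)) \<and>
     (\<forall>f\<in>topspace (arr P). act1 P f (one1 G) = f) \<and>
     (\<forall>f\<in>topspace (arr P). \<forall>g\<in>topspace (arr G). \<forall>h\<in>topspace (arr G).
        act1 P (act1 P f g) h = act1 P f (mul1 G g h)) \<and>
     (\<forall>f\<in>topspace (arr P). \<forall>g\<in>topspace (arr G).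
        sr P (act1 P f g) = act0 P (sr P f) (sr G g) \<and>
        tg P (act1 P f g) = act0 P (tg P f) (tg G g)) \<and>
     (\<forall>p\<in>topspace (obj P). \<forall>x\<in>topspace (obj G).
        act1 P (un P p) (un G x) = un P (act0 P p x)) \<and>
     (\<forall>f\<in>topspace (arr P). \<forall>f'\<in>topspace (arr P). \<forall>g\<in>topspace (arr G). \<forall>g'\<in>topspace (arr G).
        tg P f = sr P f' \<longrightarrow> tg G g = sr G g' \<longrightarrow>
        act1 P (cp P f f') (cp G g g') = cp P (act1 P f g) (act1 P f' g'))"

definition cfunctor where
  "cfunctor C D F0 F1 \<longleftrightarrow>
     continuous_map (obj C) (obj D) F0 \<and>
     continuous_map (arr C) (arr D) F1 \<and>
     (\<forall>f\<in>topspace (arr C). sr D (F1 f) = F0 (sr C f) \<and> tg D (F1 f) = F0 (tg C f)) \<and>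
     (\<forall>p\<in>topspace (obj C). F1 (un C p) = un D (F0 p)) \<and>
     (\<forall>f\<in>topspace (arr C). \<forall>g\<in>topspace (arr C). tg C f = sr C g \<longrightarrow>
        F1 (cp C f g) = cp D (F1 f) (F1 g))"

text \<open>A continuous natural transformation eta : F => H between functors C -> D
(automatically a natural isomorphism, D being a groupoid).\<close>

definition cnat where
  "cnat C D F0 F1 H0 H1 \<eta> \<longleftrightarrow>
     continuous_map (obj C) (arr D) \<eta> \<and>
     (\<forall>p\<in>topspace (obj C). sr D (\<eta> p) = F0 p \<and> tg D (\<eta> p) = H0 p) \<and>
     (\<forall>f\<in>topspace (arr C). cp D (\<eta> (sr C f)) (H1 f) = cp D (F1 f) (\<eta> (tg C f)))"

text \<open>A continuous functor pi : P -> Xbar (Xbar the discrete groupoid on X) is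
determined by its object map.\<close>

definition bundle_functor :: "'a topology \<Rightarrow> ('p,'q,'x,'g) gspace \<Rightarrow> ('p \<Rightarrow> 'a) \<Rightarrow> bool" where
  "bundle_functor X P \<pi> \<longleftrightarrow>
     continuous_map (obj P) X \<pi> \<and>
     (\<forall>f\<in>topspace (arr P). \<pi> (sr P f) = \<pi> (tg P f))"

definition restr :: "('p,'q,'x,'g) gspace \<Rightarrow> ('p \<Rightarrow> 'a) \<Rightarrow> 'a set \<Rightarrow> ('p,'q) tgpd" where
  "restr P \<pi> U =
     \<lparr> obj = subtopology (obj P) {p. \<pi> p \<in> U},
       arr = subtopology (arr P) {f. \<pi> (sr P f) \<in> U},
       sr = sr P, tg = tg P, un = un P, cp = cp P, iv = iv P \<rparr>"

definition trivb :: "('x,'g) tgrp2 \<Rightarrow> 'a topology \<Rightarrow> 'a set \<Rightarrow> ('a \<times> 'x, 'a \<times> 'g) tgpd" where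
  "trivb G X U =
     \<lparr> obj = prod_topology (subtopology X U) (obj G),
       arr = prod_topology (subtopology X U) (arr G),
       sr = (\<lambda>(u,g). (u, sr G g)), tg = (\<lambda>(u,g). (u, tg G g)),
       un = (\<lambda>(u,x). (u, un G x)),
       cp = (\<lambda>(u,g) (v,h). (u, cp G g h)),
       iv = (\<lambda>(u,g). (u, iv G g)) \<rparr>"

record ('a,'p,'q,'x,'g) chart =
  cU :: "'a set"
  psi0 :: "'p \<Rightarrow> 'a \<times> 'x"
  psi1 :: "'q \<Rightarrow> 'a \<times> 'g"
  phi0 :: "'a \<times> 'x \<Rightarrow> 'p"
  phi1 :: "'a \<times> 'g \<Rightarrow> 'q"
  eps :: "'p \<Rightarrow> 'q"

definition is_chart ::
  "('x,'g) tgrp2 \<Rightarrow> 'a topology \<Rightarrow> ('p,'q,'x,'g) gspace \<Rightarrow> ('p \<Rightarrow> 'a)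
     \<Rightarrow> ('a,'p,'q,'x,'g) chart \<Rightarrow> bool" where
  "is_chart G X P \<pi> c \<longleftrightarrow>
     openin X (cU c) \<and>
     (let PU = restr P \<pi> (cU c); T = trivb G X (cU c) in
       \<comment> \<open>psi : P|_U -> Ubar x G, a G-equivariant continuous functor
           (P|_U is G-stable, so that it is a G-2-space)\<close>
       cfunctor PU T (psi0 c) (psi1 c) \<and>
       (\<forall>p\<in>topspace (obj PU). \<forall>x\<in>topspace (obj G).
          act0 P p x \<in> topspace (obj PU) \<and>
          psi0 c (act0 P p x) = (fst (psi0 c p), mul0 G (snd (psi0 c p)) x)) \<and>
       (\<forall>f\<in>topspace (arr PU). \<forall>g\<in>topspace (arr G).
          act1 P f g \<in> topspace (arr PU) \<and>
          psi1 c (act1 P f g) = (fst (psi1 c f), mul1 G (snd (psi1 c f)) g)) \<and>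
       \<comment> \<open>phi : Ubar x G -> P|_U, a G-equivariant continuous functor\<close>
       cfunctor T PU (phi0 c) (phi1 c) \<and>
       (\<forall>u\<in>cU c. \<forall>x\<in>topspace (obj G). \<forall>y\<in>topspace (obj G).
          phi0 c (u, mul0 G x y) = act0 P (phi0 c (u, x)) y) \<and>
       (\<forall>u\<in>cU c. \<forall>g\<in>topspace (arr G). \<forall>h\<in>topspace (arr G).
          phi1 c (u, mul1 G g h) = act1 P (phi1 c (u, g)) h) \<and>
       \<comment> \<open>pseudo-inverse: continuous natural isos phi psi => id (this is eps) and psi phi => id\<close>
       cnat PU PU (\<lambda>p. phi0 c (psi0 c p)) (\<lambda>f. phi1 c (psi1 c f)) (\<lambda>p. p) (\<lambda>f. f) (eps c) \<and>
       (\<exists>\<eta>. cnat T T (\<lambda>y. psi0 c (phi0 c y)) (\<lambda>g. psi1 c (phi1 c g)) (\<lambda>y. y) (\<lambda>g. g) \<eta>) \<and>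
       \<comment> \<open>eps is G0-equivariant\<close>
       (\<forall>p\<in>topspace (obj PU). \<forall>x\<in>topspace (obj G).
          eps c (act0 P p x) = act1 P (eps c p) (un G x)) \<and>
       \<comment> \<open>pr1 psi = pi|_U and pi|_U phi = pr1\<close>
       (\<forall>p\<in>topspace (obj PU). fst (psi0 c p) = \<pi> p) \<and>
       (\<forall>y\<in>topspace (obj T). \<pi> (phi0 c y) = fst y))"

definition is_atlas ::
  "('x,'g) tgrp2 \<Rightarrow> 'a topology \<Rightarrow> ('p,'q,'x,'g) gspace \<Rightarrow> ('p \<Rightarrow> 'a)
     \<Rightarrow> 'i set \<Rightarrow> ('i \<Rightarrow> ('a,'p,'q,'x,'g) chart) \<Rightarrow> bool" where
  "is_atlas G X P \<pi> I A \<longleftrightarrow>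
     (\<forall>i\<in>I. is_chart G X P \<pi> (A i)) \<and> (\<Union>i\<in>I. cU (A i)) = topspace X"

text \<open>x_ij(u) determined by T_ij(u,1) = (u, x_ij(u)) with T_ij = psi_i phi_j.\<close>

definition xA :: "('x,'g) tgrp2 \<Rightarrow> ('i \<Rightarrow> ('a,'p,'q,'x,'g) chart) \<Rightarrow> 'i \<Rightarrow> 'i \<Rightarrow> 'a \<Rightarrow> 'x" where
  "xA G A i j u = snd (psi0 (A i) (phi0 (A j) (u, one0 G)))"

definition eA :: "('x,'g) tgrp2 \<Rightarrow> ('i \<Rightarrow> ('a,'p,'q,'x,'g) chart) \<Rightarrow> 'i \<Rightarrow> 'i \<Rightarrow> 'i \<Rightarrow> 'a \<Rightarrow> 'g" where
  "eA G A i j k u = (THE e. e \<in> topspace (arr G) \<and>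
     (\<forall>x\<in>topspace (obj G). psi1 (A i) (eps (A j) (phi0 (A k) (u, x))) =
        (u, mul1 G e (un G (mul0 G (mul0 G (xA G A i j u) (xA G A j k u)) x)))))"

definition cech_cocycle ::
  "('x,'g) tgrp2 \<Rightarrow> 'a topology \<Rightarrow> 'i set \<Rightarrow> ('i \<Rightarrow> 'a set)
     \<Rightarrow> ('i \<Rightarrow> 'i \<Rightarrow> 'a \<Rightarrow> 'x) \<Rightarrow> ('i \<Rightarrow> 'i \<Rightarrow> 'i \<Rightarrow> 'a \<Rightarrow> 'g) \<Rightarrow> bool" where
  "cech_cocycle G X I U x e \<longleftrightarrow>
     (\<forall>i\<in>I. \<forall>j\<in>I. continuous_map (subtopology X (U i \<inter> U j)) (obj G) (x i j)) \<and>
     (\<forall>i\<in>I. \<forall>j\<in>I. \<forall>k\<in>I.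
        continuous_map (subtopology X (U i \<inter> U j \<inter> U k)) (subtopology (arr G) (kerS G)) (e i j k)) \<and>
     (\<forall>i\<in>I. \<forall>j\<in>I. \<forall>k\<in>I. \<forall>u\<in>U i \<inter> U j \<inter> U k.
        mul0 G (mul0 G (tg G (e i j k u)) (x i j u)) (x j k u) = x i k u) \<and>
     (\<forall>i\<in>I. \<forall>j\<in>I. \<forall>k\<in>I. \<forall>l\<in>I. \<forall>u\<in>U i \<inter> U j \<inter> U k \<inter> U l.
        mul1 G (e i k l u) (e i j k u) = mul1 G (e i j l u) (conj2 G (x i j u) (e j k l u)))"

end

theory Submission
  imports Defs
begin

text \<open>
  In the local trivialisations everything becomes a computation in \<open>G\<close>. The transition
  functor psi_i phi_j multiplies objects on the left by x_ij(u) and arrows by 1_{x_ij(u)}, and by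
  equivariance psi_i eps_j phi_k (u, x) = (u, gamma_ijk(u) 1_x) for a single arrow gamma_ijk(u)
  from x_ij(u) x_jk(u) to x_ik(u). So e_ijk is the projection g |-> g 1_{s(g)^-1} of gamma_ijk
  to E = Ker s, and the first cocycle condition is immediate.

  Since g * h = h 1_{t(g)^-1} g, this projection turns composition into the reversed product;
  moreover it absorbs right factors 1_x and turns left factors 1_x into conjugation by x.
  Applying psi_i to the naturality square of eps_j at the arrow eps_k(phi_l(u, 1)) gives
  (gamma_ijk 1_{x_kl}) * gamma_ikl = (1_{x_ij} gamma_jkl) * gamma_ijl, and projecting this
  identity to E yields exactly e_ikl e_ijk = e_ijl ^{x_ij}e_jkl.
\<close>

section \<open>Topological groups\<close>

locale topological_group =
  fixes T :: "'a topology" and m :: "'a \<Rightarrow> 'a \<Rightarrow> 'a" and i :: "'a \<Rightarrow> 'a" and e :: 'a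
  assumes topgroup: "topgroup T m i e"
begin

lemma one_closed [simp]: "e \<in> topspace T"
  and mult_closed [simp]: "a \<in> topspace T \<Longrightarrow> b \<in> topspace T \<Longrightarrow> m a b \<in> topspace T"
  and inv_closed [simp]: "a \<in> topspace T \<Longrightarrow> i a \<in> topspace T"
  and assoc [simp]: "a \<in> topspace T \<Longrightarrow> b \<in> topspace T \<Longrightarrow> c \<in> topspace T \<Longrightarrow>
    m (m a b) c = m a (m b c)"
  and left_unit [simp]: "a \<in> topspace T \<Longrightarrow> m e a = a"
  and right_unit [simp]: "a \<in> topspace T \<Longrightarrow> m a e = a"
  and left_inverse [simp]: "a \<in> topspace T \<Longrightarrow> m (i a) a = e"
  and right_inverse [simp]: "a \<in> topspace T \<Longrightarrow> m a (i a) = e"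
  and continuous_map_prod_mult: "continuous_map (prod_topology T T) T (\<lambda>(a, b). m a b)"
  and continuous_map_inv: "continuous_map T T i"
  using topgroup by (simp_all add: topgroup_def)

lemma inv_mult_cancel_left [simp]: "a \<in> topspace T \<Longrightarrow> b \<in> topspace T \<Longrightarrow> m (i a) (m a b) = b"
  using assoc[of "i a" a b] by simp

lemma mult_inv_cancel_left [simp]: "a \<in> topspace T \<Longrightarrow> b \<in> topspace T \<Longrightarrow> m a (m (i a) b) = b"
  using assoc[of a "i a" b] by simp

lemma right_cancel:
  assumes "a \<in> topspace T" "b \<in> topspace T" "c \<in> topspace T" "m a c = m b c"
  shows "a = b"
proof -
  have "m (m a c) (i c) = m (m b c) (i c)" using assms(4) by simp
  then show ?thesis using assms(1-3) by simp
qed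

lemma idempotent_eq_one: "a \<in> topspace T \<Longrightarrow> m a a = a \<Longrightarrow> a = e"
  using right_cancel[of a e a] by simp

lemma inv_mult: "a \<in> topspace T \<Longrightarrow> b \<in> topspace T \<Longrightarrow> i (m a b) = m (i b) (i a)"
  by (rule right_cancel[of _ _ "m a b"]) simp_all

lemma continuous_map_mult:
  "continuous_map Y T f \<Longrightarrow> continuous_map Y T g \<Longrightarrow> continuous_map Y T (\<lambda>y. m (f y) (g y))"
  using continuous_map_compose[OF continuous_map_pairedI continuous_map_prod_mult, of Y f g]
  by (simp add: o_def)

end

section \<open>Topological 2-groups and the projection onto \<open>Ker s\<close>\<close>

locale topological_2_group =
  fixes G :: "('x,'g) tgrp2"
  assumes two_group: "two_group G"
begin

sublocale G0: topological_group "obj G" "mul0 G" "inv0 G" "one0 G"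
  using two_group by (simp add: two_group_def topological_group_def)

sublocale G1: topological_group "arr G" "mul1 G" "inv1 G" "one1 G"
  using two_group by (simp add: two_group_def topological_group_def)

lemma continuous_map_un: "continuous_map (obj G) (arr G) (un G)"
  and continuous_map_sr: "continuous_map (arr G) (obj G) (sr G)"
  and continuous_map_tg: "continuous_map (arr G) (obj G) (tg G)"
  using two_group by (simp_all add: two_group_def tgroupoid_def)

lemma un_closed [simp]: "x \<in> topspace (obj G) \<Longrightarrow> un G x \<in> topspace (arr G)"
  using continuous_map_funspace[OF continuous_map_un] by blast

lemma sr_closed [simp]: "g \<in> topspace (arr G) \<Longrightarrow> sr G g \<in> topspace (obj G)"
  using continuous_map_funspace[OF continuous_map_sr] by blast

lemma tg_closed [simp]: "g \<in> topspace (arr G) \<Longrightarrow> tg G g \<in> topspace (obj G)"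
  using continuous_map_funspace[OF continuous_map_tg] by blast

lemma sr_un [simp]: "x \<in> topspace (obj G) \<Longrightarrow> sr G (un G x) = x"
  and tg_un [simp]: "x \<in> topspace (obj G) \<Longrightarrow> tg G (un G x) = x"
  and cp_un_left: "g \<in> topspace (arr G) \<Longrightarrow> cp G (un G (sr G g)) g = g"
  and cp_un_right: "g \<in> topspace (arr G) \<Longrightarrow> cp G g (un G (tg G g)) = g"
  and sr_cp: "g \<in> topspace (arr G) \<Longrightarrow> h \<in> topspace (arr G) \<Longrightarrow> tg G g = sr G h \<Longrightarrow>
    sr G (cp G g h) = sr G g"
  using two_group by (simp_all add: two_group_def tgroupoid_def)

lemma sr_mult [simp]:
    "g \<in> topspace (arr G) \<Longrightarrow> h \<in> topspace (arr G) \<Longrightarrow> sr G (mul1 G g h) = mul0 G (sr G g) (sr G h)"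
  and tg_mult [simp]:
    "g \<in> topspace (arr G) \<Longrightarrow> h \<in> topspace (arr G) \<Longrightarrow> tg G (mul1 G g h) = mul0 G (tg G g) (tg G h)"
  and un_mult:
    "x \<in> topspace (obj G) \<Longrightarrow> y \<in> topspace (obj G) \<Longrightarrow> un G (mul0 G x y) = mul1 G (un G x) (un G y)"
  using two_group by (simp_all add: two_group_def)

lemma interchange:
  "f \<in> topspace (arr G) \<Longrightarrow> g \<in> topspace (arr G) \<Longrightarrow>
   f' \<in> topspace (arr G) \<Longrightarrow> g' \<in> topspace (arr G) \<Longrightarrow>
   tg G f = sr G g \<Longrightarrow> tg G f' = sr G g' \<Longrightarrow>
   cp G (mul1 G f f') (mul1 G g g') = mul1 G (cp G f g) (cp G f' g')"
  using two_group by (simp add: two_group_def)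

lemma un_one [simp]: "un G (one0 G) = one1 G"
  using G1.idempotent_eq_one[of "un G (one0 G)"] un_mult[of "one0 G" "one0 G"] by simp

lemma sr_one [simp]: "sr G (one1 G) = one0 G"
  using sr_un[of "one0 G"] by simp

lemma un_inv: "x \<in> topspace (obj G) \<Longrightarrow> un G (inv0 G x) = inv1 G (un G x)"
  by (rule G1.right_cancel[of _ _ "un G x"]) (simp_all add: un_mult[symmetric])

lemma cp_eq_mult:
  assumes g: "g \<in> topspace (arr G)" and h: "h \<in> topspace (arr G)" and gh: "tg G g = sr G h"
  shows "cp G g h = mul1 G h (mul1 G (un G (inv0 G (tg G g))) g)"
proof -
  let ?b = "tg G g"
  have b: "?b \<in> topspace (obj G)" using g by simp
  have "cp G g h = cp G (mul1 G (un G ?b) (mul1 G (un G (inv0 G ?b)) g)) (mul1 G h (one1 G))"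
    using b g h by (simp add: un_inv)
  also have "\<dots> = mul1 G (cp G (un G ?b) h) (cp G (mul1 G (un G (inv0 G ?b)) g) (one1 G))"
    by (rule interchange) (use b g h gh in \<open>simp_all del: G1.assoc G0.assoc\<close>)
  also have "cp G (un G ?b) h = h" using cp_un_left[OF h] gh by simp
  also have "cp G (mul1 G (un G (inv0 G ?b)) g) (one1 G) = mul1 G (un G (inv0 G ?b)) g"
    using cp_un_right[of "mul1 G (un G (inv0 G ?b)) g"] b g by simp
  finally show ?thesis .
qed

end

definition ker_part :: "('x,'g) tgrp2 \<Rightarrow> 'g \<Rightarrow> 'g" where
  "ker_part G g = mul1 G g (un G (inv0 G (sr G g)))"

context topological_2_group
begin

lemma ker_part_closed [simp]: "g \<in> topspace (arr G) \<Longrightarrow> ker_part G g \<in> topspace (arr G)"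
  by (simp add: ker_part_def)

lemma ker_part_in_kerS: "g \<in> topspace (arr G) \<Longrightarrow> ker_part G g \<in> kerS G"
  by (simp add: ker_part_def kerS_def)

lemma tg_ker_part: "g \<in> topspace (arr G) \<Longrightarrow> tg G (ker_part G g) = mul0 G (tg G g) (inv0 G (sr G g))"
  by (simp add: ker_part_def)

lemma ker_part_mult_un_sr: "g \<in> topspace (arr G) \<Longrightarrow> mul1 G (ker_part G g) (un G (sr G g)) = g"
  by (simp add: ker_part_def un_inv)

lemma ker_part_eqI:
  assumes "e \<in> topspace (arr G)" "g \<in> topspace (arr G)" "mul1 G e (un G (sr G g)) = g"
  shows "ker_part G g = e"
  by (rule G1.right_cancel[of _ _ "un G (sr G g)"]) (use assms ker_part_mult_un_sr in simp_all)

lemma ker_part_mult_un: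
  "g \<in> topspace (arr G) \<Longrightarrow> x \<in> topspace (obj G) \<Longrightarrow> ker_part G (mul1 G g (un G x)) = ker_part G g"
  by (simp add: ker_part_def un_inv un_mult G0.inv_mult)

lemma ker_part_un_mult:
  "g \<in> topspace (arr G) \<Longrightarrow> x \<in> topspace (obj G) \<Longrightarrow>
   ker_part G (mul1 G (un G x) g) = conj2 G x (ker_part G g)"
  by (simp add: ker_part_def conj2_def un_inv un_mult G0.inv_mult)

lemma ker_part_cp:
  assumes "g \<in> topspace (arr G)" "h \<in> topspace (arr G)" "tg G g = sr G h"
  shows "ker_part G (cp G g h) = mul1 G (ker_part G h) (ker_part G g)"
  using assms by (simp add: ker_part_def cp_eq_mult sr_cp)

lemma continuous_map_ker_part: "continuous_map (arr G) (arr G) (ker_part G)"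
  unfolding ker_part_def
  by (intro G1.continuous_map_mult continuous_map_id[unfolded id_def]
      continuous_map_compose[OF continuous_map_compose[OF continuous_map_sr G0.continuous_map_inv]
        continuous_map_un, unfolded o_def])

end

section \<open>Charts of a \<open>G\<close>-2-space over \<open>X\<close>\<close>

lemma topspace_restr_obj [simp]:
  "topspace (obj (restr P \<pi> U)) = {p \<in> topspace (obj P). \<pi> p \<in> U}"
  and topspace_restr_arr [simp]:
  "topspace (arr (restr P \<pi> U)) = {f \<in> topspace (arr P). \<pi> (sr P f) \<in> U}"
  by (auto simp: restr_def)

lemma topspace_trivb_obj [simp]:
  "U \<subseteq> topspace X \<Longrightarrow> topspace (obj (trivb G X U)) = U \<times> topspace (obj G)"
  and topspace_trivb_arr [simp]:
  "U \<subseteq> topspace X \<Longrightarrow> topspace (arr (trivb G X U)) = U \<times> topspace (arr G)"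
  by (auto simp: trivb_def)

lemma cfunctor_obj_closed:
  "cfunctor C D F0 F1 \<Longrightarrow> p \<in> topspace (obj C) \<Longrightarrow> F0 p \<in> topspace (obj D)"
  and cfunctor_arr_closed:
  "cfunctor C D F0 F1 \<Longrightarrow> f \<in> topspace (arr C) \<Longrightarrow> F1 f \<in> topspace (arr D)"
  unfolding cfunctor_def by (meson continuous_map_funspace funcset_mem)+

lemma cnat_closed: "cnat C D F0 F1 H0 H1 \<eta> \<Longrightarrow> p \<in> topspace (obj C) \<Longrightarrow> \<eta> p \<in> topspace (arr D)"
  unfolding cnat_def by (meson continuous_map_funspace funcset_mem)

locale g2_bundle = topological_2_group G for G :: "('x,'g) tgrp2" +
  fixes X :: "'a topology" and P :: "('p,'q,'x,'g) gspace" and \<pi> :: "'p \<Rightarrow> 'a"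
  assumes g2space: "g2space G P" and bundle_functor: "bundle_functor X P \<pi>"
begin

lemma sr_P_closed [simp]: "f \<in> topspace (arr P) \<Longrightarrow> sr P f \<in> topspace (obj P)"
  and un_P_closed [simp]: "p \<in> topspace (obj P) \<Longrightarrow> un P p \<in> topspace (arr P)"
  using g2space continuous_map_funspace[of "arr P" "obj P" "sr P"]
    continuous_map_funspace[of "obj P" "arr P" "un P"]
  by (auto simp: g2space_def tgroupoid_def)

lemma sr_P_un [simp]: "p \<in> topspace (obj P) \<Longrightarrow> sr P (un P p) = p"
  using g2space by (simp add: g2space_def tgroupoid_def)

lemma \<pi>_tg: "f \<in> topspace (arr P) \<Longrightarrow> \<pi> (tg P f) = \<pi> (sr P f)"
  using bundle_functor by (simp add: bundle_functor_def)

context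
  fixes c :: "('a,'p,'q,'x,'g) chart"
  assumes chart: "is_chart G X P \<pi> c"
begin

lemma chart_subset: "cU c \<subseteq> topspace X"
  using chart openin_subset by (auto simp: is_chart_def)

lemma psi_functor: "cfunctor (restr P \<pi> (cU c)) (trivb G X (cU c)) (psi0 c) (psi1 c)"
  and phi_functor: "cfunctor (trivb G X (cU c)) (restr P \<pi> (cU c)) (phi0 c) (phi1 c)"
  and eps_natural_iso: "cnat (restr P \<pi> (cU c)) (restr P \<pi> (cU c))
    (\<lambda>p. phi0 c (psi0 c p)) (\<lambda>f. phi1 c (psi1 c f)) (\<lambda>p. p) (\<lambda>f. f) (eps c)"
  using chart by (simp_all add: is_chart_def Let_def)

lemma psi0_chart:
  assumes "p \<in> topspace (obj P)" "\<pi> p \<in> cU c"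
  shows "psi0 c p = (\<pi> p, snd (psi0 c p))" "snd (psi0 c p) \<in> topspace (obj G)"
proof -
  have "psi0 c p \<in> cU c \<times> topspace (obj G)"
    using cfunctor_obj_closed[OF psi_functor] assms chart_subset by simp
  moreover have "fst (psi0 c p) = \<pi> p"
    using chart assms by (simp add: is_chart_def Let_def)
  ultimately show "psi0 c p = (\<pi> p, snd (psi0 c p))" "snd (psi0 c p) \<in> topspace (obj G)"
    by (auto simp: prod_eq_iff)
qed

lemma psi0_act0:
  "p \<in> topspace (obj P) \<Longrightarrow> \<pi> p \<in> cU c \<Longrightarrow> x \<in> topspace (obj G) \<Longrightarrow>
   psi0 c (act0 P p x) = (\<pi> p, mul0 G (snd (psi0 c p)) x)"
  using chart psi0_chart(1) by (simp add: is_chart_def Let_def)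

lemma psi1_chart:
  assumes "f \<in> topspace (arr P)" "\<pi> (sr P f) \<in> cU c"
  shows "psi1 c f = (\<pi> (sr P f), snd (psi1 c f))" "snd (psi1 c f) \<in> topspace (arr G)"
    "sr G (snd (psi1 c f)) = snd (psi0 c (sr P f))" "tg G (snd (psi1 c f)) = snd (psi0 c (tg P f))"
proof -
  obtain u g where ug: "psi1 c f = (u, g)" by fastforce
  have g: "g \<in> topspace (arr G)"
    using cfunctor_arr_closed[OF psi_functor] assms chart_subset ug by fastforce
  have "sr (trivb G X (cU c)) (psi1 c f) = psi0 c (sr P f) \<and>
      tg (trivb G X (cU c)) (psi1 c f) = psi0 c (tg P f)"
    using psi_functor assms unfolding cfunctor_def by (simp add: restr_def)
  then have src: "(u, sr G g) = psi0 c (sr P f)" and tgt: "(u, tg G g) = psi0 c (tg P f)"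
    using ug by (simp_all add: trivb_def)
  have "(u, sr G g) = (\<pi> (sr P f), snd (psi0 c (sr P f)))"
    using trans[OF src psi0_chart(1)[OF sr_P_closed[OF assms(1)] assms(2)]] .
  moreover have "tg G g = snd (psi0 c (tg P f))"
    using arg_cong[OF tgt, of snd] by simp
  ultimately show "psi1 c f = (\<pi> (sr P f), snd (psi1 c f))" "snd (psi1 c f) \<in> topspace (arr G)"
    "sr G (snd (psi1 c f)) = snd (psi0 c (sr P f))" "tg G (snd (psi1 c f)) = snd (psi0 c (tg P f))"
    using ug g by simp_all
qed

lemma psi1_un:
  assumes "p \<in> topspace (obj P)" "\<pi> p \<in> cU c"
  shows "psi1 c (un P p) = (\<pi> p, un G (snd (psi0 c p)))"
proof -
  have "psi1 c (un P p) = un (trivb G X (cU c)) (psi0 c p)"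
    using psi_functor assms unfolding cfunctor_def by (simp add: restr_def)
  also have "\<dots> = (\<pi> p, un G (snd (psi0 c p)))"
    by (subst psi0_chart(1)[OF assms]) (simp add: trivb_def)
  finally show ?thesis .
qed

lemma psi1_cp:
  assumes "f \<in> topspace (arr P)" "\<pi> (sr P f) \<in> cU c" "g \<in> topspace (arr P)" "tg P f = sr P g"
  shows "psi1 c (cp P f g) = (\<pi> (sr P f), cp G (snd (psi1 c f)) (snd (psi1 c g)))"
proof -
  have g: "\<pi> (sr P g) \<in> cU c" using assms \<pi>_tg[of f] by simp
  have "psi1 c (cp P f g) = cp (trivb G X (cU c)) (psi1 c f) (psi1 c g)"
    using psi_functor assms g unfolding cfunctor_def by (simp add: restr_def)
  also have "\<dots> = (\<pi> (sr P f), cp G (snd (psi1 c f)) (snd (psi1 c g)))"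
    by (subst (1 2) psi1_chart(1)) (use assms g in \<open>simp_all add: trivb_def\<close>)
  finally show ?thesis .
qed

lemma psi1_act1:
  "f \<in> topspace (arr P) \<Longrightarrow> \<pi> (sr P f) \<in> cU c \<Longrightarrow> g \<in> topspace (arr G) \<Longrightarrow>
   psi1 c (act1 P f g) = (\<pi> (sr P f), mul1 G (snd (psi1 c f)) g)"
  using chart arg_cong[where f = fst, OF psi1_chart(1)] by (simp add: is_chart_def Let_def)

lemma phi0_chart:
  assumes "u \<in> cU c" "x \<in> topspace (obj G)"
  shows "phi0 c (u, x) \<in> topspace (obj P)" "\<pi> (phi0 c (u, x)) = u"
  using cfunctor_obj_closed[OF phi_functor] chart chart_subset assms
  by (auto simp: is_chart_def Let_def)

lemma phi1_chart:
  assumes "u \<in> cU c" "g \<in> topspace (arr G)"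
  shows "phi1 c (u, g) \<in> topspace (arr P)" "sr P (phi1 c (u, g)) = phi0 c (u, sr G g)"
    "tg P (phi1 c (u, g)) = phi0 c (u, tg G g)"
  using cfunctor_arr_closed[OF phi_functor] phi_functor chart_subset assms
  by (auto simp: cfunctor_def restr_def trivb_def)

lemma phi1_un: "u \<in> cU c \<Longrightarrow> x \<in> topspace (obj G) \<Longrightarrow> phi1 c (u, un G x) = un P (phi0 c (u, x))"
  using phi_functor chart_subset by (auto simp: cfunctor_def restr_def trivb_def)

lemma phi0_eq_act0:
  assumes "u \<in> cU c" "x \<in> topspace (obj G)"
  shows "phi0 c (u, x) = act0 P (phi0 c (u, one0 G)) x"
proof -
  have "phi0 c (u, mul0 G (one0 G) x) = act0 P (phi0 c (u, one0 G)) x"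
    using chart assms by (simp add: is_chart_def Let_def del: G0.left_unit)
  then show ?thesis using assms by simp
qed

lemma phi1_eq_act1:
  assumes "u \<in> cU c" "g \<in> topspace (arr G)"
  shows "phi1 c (u, g) = act1 P (phi1 c (u, one1 G)) g"
proof -
  have "phi1 c (u, mul1 G (one1 G) g) = act1 P (phi1 c (u, one1 G)) g"
    using chart assms by (simp add: is_chart_def Let_def del: G1.left_unit)
  then show ?thesis using assms by simp
qed

lemma eps_chart:
  assumes "p \<in> topspace (obj P)" "\<pi> p \<in> cU c"
  shows "eps c p \<in> topspace (arr P)" "sr P (eps c p) = phi0 c (psi0 c p)" "tg P (eps c p) = p"
  using cnat_closed[OF eps_natural_iso] eps_natural_iso assms
  by (auto simp: cnat_def restr_def)

lemma eps_natural:
  "f \<in> topspace (arr P) \<Longrightarrow> \<pi> (sr P f) \<in> cU c \<Longrightarrow>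
   cp P (eps c (sr P f)) f = cp P (phi1 c (psi1 c f)) (eps c (tg P f))"
  using eps_natural_iso by (simp add: cnat_def restr_def)

lemma eps_act0:
  "p \<in> topspace (obj P) \<Longrightarrow> \<pi> p \<in> cU c \<Longrightarrow> x \<in> topspace (obj G) \<Longrightarrow>
   eps c (act0 P p x) = act1 P (eps c p) (un G x)"
  using chart by (simp add: is_chart_def Let_def)

lemma continuous_map_phi0:
  assumes "continuous_map Y X h" "\<forall>y\<in>topspace Y. h y \<in> cU c" "x \<in> topspace (obj G)"
  shows "continuous_map Y (obj P) (\<lambda>y. phi0 c (h y, x))"
proof -
  have "continuous_map Y (prod_topology (subtopology X (cU c)) (obj G)) (\<lambda>y. (h y, x))"
    using assms by (auto simp: continuous_map_in_subtopology intro!: continuous_map_pairedI)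
  moreover have "continuous_map (prod_topology (subtopology X (cU c)) (obj G)) (obj P) (phi0 c)"
    using phi_functor by (simp add: cfunctor_def restr_def trivb_def continuous_map_in_subtopology)
  ultimately show ?thesis
    using continuous_map_compose by (fastforce simp: o_def)
qed

lemma continuous_map_snd_psi0:
  assumes "continuous_map Y (obj P) f" "\<forall>y\<in>topspace Y. \<pi> (f y) \<in> cU c"
  shows "continuous_map Y (obj G) (\<lambda>y. snd (psi0 c (f y)))"
proof -
  have "continuous_map Y (subtopology (obj P) {p. \<pi> p \<in> cU c}) f"
    using assms by (auto simp: continuous_map_in_subtopology)
  moreover have "continuous_map (subtopology (obj P) {p. \<pi> p \<in> cU c})
      (prod_topology (subtopology X (cU c)) (obj G)) (psi0 c)"
    using psi_functor by (simp add: cfunctor_def restr_def trivb_def)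
  ultimately show ?thesis
    using continuous_map_compose[OF continuous_map_compose continuous_map_snd] by (fastforce simp: o_def)
qed

lemma continuous_map_snd_psi1:
  assumes "continuous_map Y (arr P) f" "\<forall>y\<in>topspace Y. \<pi> (sr P (f y)) \<in> cU c"
  shows "continuous_map Y (arr G) (\<lambda>y. snd (psi1 c (f y)))"
proof -
  have "continuous_map Y (subtopology (arr P) {f. \<pi> (sr P f) \<in> cU c}) f"
    using assms by (auto simp: continuous_map_in_subtopology)
  moreover have "continuous_map (subtopology (arr P) {f. \<pi> (sr P f) \<in> cU c})
      (prod_topology (subtopology X (cU c)) (arr G)) (psi1 c)"
    using psi_functor by (simp add: cfunctor_def restr_def trivb_def)
  ultimately show ?thesis
    using continuous_map_compose[OF continuous_map_compose continuous_map_snd] by (fastforce simp: o_def)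
qed

lemma continuous_map_eps:
  assumes "continuous_map Y (obj P) f" "\<forall>y\<in>topspace Y. \<pi> (f y) \<in> cU c"
  shows "continuous_map Y (arr P) (\<lambda>y. eps c (f y))"
proof -
  have "continuous_map Y (subtopology (obj P) {p. \<pi> p \<in> cU c}) f"
    using assms by (auto simp: continuous_map_in_subtopology)
  moreover have "continuous_map (subtopology (obj P) {p. \<pi> p \<in> cU c}) (arr P) (eps c)"
    using eps_natural_iso by (simp add: cnat_def restr_def continuous_map_in_subtopology)
  ultimately show ?thesis
    by (simp add: continuous_map_compose[unfolded o_def])
qed

end

end

section \<open>The cocycle of an atlas\<close>

definition gammaA ::
    "('x,'g) tgrp2 \<Rightarrow> ('i \<Rightarrow> ('a,'p,'q,'x,'g) chart) \<Rightarrow> 'i \<Rightarrow> 'i \<Rightarrow> 'i \<Rightarrow> 'a \<Rightarrow> 'g" where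
  "gammaA G A i j k u = snd (psi1 (A i) (eps (A j) (phi0 (A k) (u, one0 G))))"

locale principal_2_bundle = g2_bundle G X P \<pi>
  for G :: "('x,'g) tgrp2" and X :: "'a topology" and P :: "('p,'q,'x,'g) gspace"
    and \<pi> :: "'p \<Rightarrow> 'a" +
  fixes I :: "'i set" and A :: "'i \<Rightarrow> ('a,'p,'q,'x,'g) chart"
  assumes atlas: "is_atlas G X P \<pi> I A"
begin

lemma chart [simp]: "i \<in> I \<Longrightarrow> is_chart G X P \<pi> (A i)"
  using atlas by (simp add: is_atlas_def)

lemma xA_closed:
  assumes "i \<in> I" "j \<in> I" "u \<in> cU (A i) \<inter> cU (A j)"
  shows "xA G A i j u \<in> topspace (obj G)"
  using assms phi0_chart[of "A j" u "one0 G"] psi0_chart(2)[of "A i" "phi0 (A j) (u, one0 G)"]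
  by (simp add: xA_def)

lemma transition_obj:
  assumes "i \<in> I" "j \<in> I" "u \<in> cU (A i) \<inter> cU (A j)" "x \<in> topspace (obj G)"
  shows "psi0 (A i) (phi0 (A j) (u, x)) = (u, mul0 G (xA G A i j u) x)"
  using assms phi0_chart[of "A j" u "one0 G"] phi0_eq_act0[of "A j" u x]
    psi0_act0[of "A i" "phi0 (A j) (u, one0 G)" x]
  by (simp add: xA_def)

lemma transition_arr:
  assumes "i \<in> I" "j \<in> I" "u \<in> cU (A i) \<inter> cU (A j)" "g \<in> topspace (arr G)"
  shows "psi1 (A i) (phi1 (A j) (u, g)) = (u, mul1 G (un G (xA G A i j u)) g)"
proof -
  let ?q = "phi0 (A j) (u, one0 G)"
  have q: "?q \<in> topspace (obj P)" "\<pi> ?q = u"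
    using phi0_chart[of "A j" u "one0 G"] assms by auto
  have "phi1 (A j) (u, g) = act1 P (un P ?q) g"
    using phi1_eq_act1[of "A j" u g] phi1_un[of "A j" u "one0 G"] assms by simp
  then show ?thesis
    using psi1_act1[of "A i" "un P ?q" g] psi1_un[of "A i" ?q] q assms by (simp add: xA_def)
qed

lemma eps_phi0:
  assumes "j \<in> I" "k \<in> I" "u \<in> cU (A j) \<inter> cU (A k)" "x \<in> topspace (obj G)"
  shows "eps (A j) (phi0 (A k) (u, x)) \<in> topspace (arr P)"
    "sr P (eps (A j) (phi0 (A k) (u, x))) = phi0 (A j) (u, mul0 G (xA G A j k u) x)"
    "tg P (eps (A j) (phi0 (A k) (u, x))) = phi0 (A k) (u, x)"
    "\<pi> (sr P (eps (A j) (phi0 (A k) (u, x)))) = u"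
  using assms phi0_chart[of "A k" u x] eps_chart[of "A j" "phi0 (A k) (u, x)"]
    \<pi>_tg[of "eps (A j) (phi0 (A k) (u, x))"] transition_obj[of j k u x]
  by auto

lemma gamma_eq:
  assumes "i \<in> I" "j \<in> I" "k \<in> I" "u \<in> cU (A i) \<inter> cU (A j) \<inter> cU (A k)" "x \<in> topspace (obj G)"
  shows "psi1 (A i) (eps (A j) (phi0 (A k) (u, x))) = (u, mul1 G (gammaA G A i j k u) (un G x))"
proof -
  let ?q = "phi0 (A k) (u, one0 G)"
  have "eps (A j) (phi0 (A k) (u, x)) = act1 P (eps (A j) ?q) (un G x)"
    using phi0_eq_act0[of "A k" u x] eps_act0[of "A j" ?q x] phi0_chart[of "A k" u "one0 G"] assms
    by simp
  then show ?thesis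
    using psi1_act1[of "A i" "eps (A j) ?q" "un G x"] eps_phi0[of j k u "one0 G"] assms
    by (simp add: gammaA_def)
qed

lemma gammaA_chart:
  assumes "i \<in> I" "j \<in> I" "k \<in> I" "u \<in> cU (A i) \<inter> cU (A j) \<inter> cU (A k)"
  shows "gammaA G A i j k u \<in> topspace (arr G)"
    "sr G (gammaA G A i j k u) = mul0 G (xA G A i j u) (xA G A j k u)"
    "tg G (gammaA G A i j k u) = xA G A i k u"
  using psi1_chart(2-4)[of "A i" "eps (A j) (phi0 (A k) (u, one0 G))"]
    eps_phi0[of j k u "one0 G"] transition_obj[of i j u "xA G A j k u"] xA_closed[of j k u] assms
  by (simp_all add: gammaA_def xA_def)

lemma eA_eq_ker_part:
  assumes "i \<in> I" "j \<in> I" "k \<in> I" "u \<in> cU (A i) \<inter> cU (A j) \<inter> cU (A k)"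
  shows "eA G A i j k u = ker_part G (gammaA G A i j k u)"
  unfolding eA_def
proof (rule the_equality)
  let ?g = "gammaA G A i j k u" and ?y = "mul0 G (xA G A i j u) (xA G A j k u)"
  have g: "?g \<in> topspace (arr G)" "sr G ?g = ?y" and y: "?y \<in> topspace (obj G)"
    using gammaA_chart[OF assms] xA_closed assms by auto
  show "ker_part G ?g \<in> topspace (arr G) \<and>
    (\<forall>x\<in>topspace (obj G). psi1 (A i) (eps (A j) (phi0 (A k) (u, x))) =
       (u, mul1 G (ker_part G ?g) (un G (mul0 G ?y x))))"
    using gamma_eq[OF assms] ker_part_mult_un_sr[of ?g] g y by (simp add: un_mult flip: G1.assoc)
  fix e
  assume "e \<in> topspace (arr G) \<and>
    (\<forall>x\<in>topspace (obj G). psi1 (A i) (eps (A j) (phi0 (A k) (u, x))) =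
       (u, mul1 G e (un G (mul0 G ?y x))))"
  then show "e = ker_part G ?g"
    using gamma_eq[OF assms, of "one0 G"] ker_part_eqI[of e ?g] g y by auto
qed

lemma gammaA_composite:
  assumes "i \<in> I" "j \<in> I" "k \<in> I" "l \<in> I" "u \<in> cU (A i) \<inter> cU (A j) \<inter> cU (A k) \<inter> cU (A l)"
  shows "cp G (mul1 G (gammaA G A i j k u) (un G (xA G A k l u))) (gammaA G A i k l u) =
    cp G (mul1 G (un G (xA G A i j u)) (gammaA G A j k l u)) (gammaA G A i j l u)"
proof -
  let ?q = "phi0 (A l) (u, one0 G)"
  let ?f = "eps (A k) ?q" and ?s = "phi0 (A k) (u, xA G A k l u)"
  have x: "xA G A a b u \<in> topspace (obj G)" if "a \<in> {i, j, k, l}" "b \<in> {i, j, k, l}" for a b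
    using xA_closed[of a b u] that assms by auto
  have f: "?f \<in> topspace (arr P)" "sr P ?f = ?s" "tg P ?f = ?q" "\<pi> (sr P ?f) = u"
    using eps_phi0[of k l u "one0 G"] x assms by auto
  have s: "eps (A j) ?s \<in> topspace (arr P)" "\<pi> (sr P (eps (A j) ?s)) = u" "tg P (eps (A j) ?s) = ?s"
    using eps_phi0[of j k u "xA G A k l u"] x assms by auto
  have psi1_f: "psi1 (A j) ?f = (u, gammaA G A j k l u)"
    using gamma_eq[of j k l u "one0 G"] gammaA_chart[of j k l u] assms by simp
  have phi1_f: "phi1 (A j) (u, gammaA G A j k l u) \<in> topspace (arr P)"
    "\<pi> (sr P (phi1 (A j) (u, gammaA G A j k l u))) = u"
    "tg P (phi1 (A j) (u, gammaA G A j k l u)) = sr P (eps (A j) ?q)"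
    using phi1_chart[of "A j" u "gammaA G A j k l u"] phi0_chart[of "A j" u]
      gammaA_chart[of j k l u] eps_phi0[of j l u "one0 G"] x assms
    by auto
  have "psi1 (A i) (cp P (eps (A j) ?s) ?f) =
      (u, cp G (mul1 G (gammaA G A i j k u) (un G (xA G A k l u))) (gammaA G A i k l u))"
    using psi1_cp[of "A i" "eps (A j) ?s" ?f] s f gamma_eq[of i j k u "xA G A k l u"]
      gamma_eq[of i k l u "one0 G"] gammaA_chart[of i k l u] x assms
    by simp
  moreover have "psi1 (A i) (cp P (phi1 (A j) (psi1 (A j) ?f)) (eps (A j) ?q)) =
      (u, cp G (mul1 G (un G (xA G A i j u)) (gammaA G A j k l u)) (gammaA G A i j l u))"
    using psi1_cp[of "A i" "phi1 (A j) (u, gammaA G A j k l u)" "eps (A j) ?q"] phi1_f psi1_f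
      transition_arr[of i j u "gammaA G A j k l u"] gamma_eq[of i j l u "one0 G"]
      gammaA_chart[of j k l u] gammaA_chart[of i j l u] eps_phi0[of j l u "one0 G"] assms
    by simp
  moreover have "cp P (eps (A j) ?s) ?f = cp P (phi1 (A j) (psi1 (A j) ?f)) (eps (A j) ?q)"
    using eps_natural[of "A j" ?f] f assms by simp
  ultimately show ?thesis by simp
qed

lemma tg_eA_cocycle:
  assumes "i \<in> I" "j \<in> I" "k \<in> I" "u \<in> cU (A i) \<inter> cU (A j) \<inter> cU (A k)"
  shows "mul0 G (mul0 G (tg G (eA G A i j k u)) (xA G A i j u)) (xA G A j k u) = xA G A i k u"
  using eA_eq_ker_part[OF assms] gammaA_chart[OF assms] xA_closed assms
  by (simp add: tg_ker_part G0.inv_mult)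

lemma eA_cocycle:
  assumes "i \<in> I" "j \<in> I" "k \<in> I" "l \<in> I" "u \<in> cU (A i) \<inter> cU (A j) \<inter> cU (A k) \<inter> cU (A l)"
  shows "mul1 G (eA G A i k l u) (eA G A i j k u) =
    mul1 G (eA G A i j l u) (conj2 G (xA G A i j u) (eA G A j k l u))"
proof -
  have x: "xA G A a b u \<in> topspace (obj G)" if "a \<in> {i, j, k, l}" "b \<in> {i, j, k, l}" for a b
    using xA_closed[of a b u] that assms by auto
  have \<gamma>: "gammaA G A a b c u \<in> topspace (arr G)"
    "sr G (gammaA G A a b c u) = mul0 G (xA G A a b u) (xA G A b c u)"
    "tg G (gammaA G A a b c u) = xA G A a c u"
    if "a \<in> {i, j, k, l}" "b \<in> {i, j, k, l}" "c \<in> {i, j, k, l}" for a b c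
    using gammaA_chart[of a b c u] that assms by auto
  have e: "eA G A a b c u = ker_part G (gammaA G A a b c u)"
    if "a \<in> {i, j, k, l}" "b \<in> {i, j, k, l}" "c \<in> {i, j, k, l}" for a b c
    using eA_eq_ker_part[of a b c u] that assms by auto
  have "mul1 G (eA G A i k l u) (eA G A i j k u) =
      ker_part G (cp G (mul1 G (gammaA G A i j k u) (un G (xA G A k l u))) (gammaA G A i k l u))"
    using x \<gamma> e by (simp add: ker_part_cp ker_part_mult_un)
  also have "\<dots> =
      ker_part G (cp G (mul1 G (un G (xA G A i j u)) (gammaA G A j k l u)) (gammaA G A i j l u))"
    using gammaA_composite[OF assms] by simp
  also have "\<dots> = mul1 G (eA G A i j l u) (conj2 G (xA G A i j u) (eA G A j k l u))"
    using x \<gamma> e by (simp add: ker_part_cp ker_part_un_mult)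
  finally show ?thesis .
qed

lemma continuous_map_xA:
  assumes "i \<in> I" "j \<in> I"
  shows "continuous_map (subtopology X (cU (A i) \<inter> cU (A j))) (obj G) (xA G A i j)"
proof -
  have "continuous_map (subtopology X (cU (A i) \<inter> cU (A j))) (obj P) (\<lambda>u. phi0 (A j) (u, one0 G))"
    using continuous_map_phi0[of "A j" _ "\<lambda>u. u"] assms by simp
  then show ?thesis
    using continuous_map_snd_psi0[of "A i" _ "\<lambda>u. phi0 (A j) (u, one0 G)"] phi0_chart assms
    by (simp add: xA_def[abs_def])
qed

lemma continuous_map_gammaA:
  assumes "i \<in> I" "j \<in> I" "k \<in> I"
  shows "continuous_map (subtopology X (cU (A i) \<inter> cU (A j) \<inter> cU (A k))) (arr G)
    (gammaA G A i j k)"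
proof -
  let ?Y = "subtopology X (cU (A i) \<inter> cU (A j) \<inter> cU (A k))"
  have "continuous_map ?Y (obj P) (\<lambda>u. phi0 (A k) (u, one0 G))"
    using continuous_map_phi0[of "A k" _ "\<lambda>u. u"] assms by simp
  then have "continuous_map ?Y (arr P) (\<lambda>u. eps (A j) (phi0 (A k) (u, one0 G)))"
    using continuous_map_eps[of "A j" ?Y "\<lambda>u. phi0 (A k) (u, one0 G)"] phi0_chart assms by simp
  then show ?thesis
    using continuous_map_snd_psi1[of "A i" _ "\<lambda>u. eps (A j) (phi0 (A k) (u, one0 G))"]
      eps_phi0 assms
    by (simp add: gammaA_def[abs_def])
qed

lemma continuous_map_eA:
  assumes "i \<in> I" "j \<in> I" "k \<in> I"
  shows "continuous_map (subtopology X (cU (A i) \<inter> cU (A j) \<inter> cU (A k)))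
    (subtopology (arr G) (kerS G)) (eA G A i j k)"
proof -
  let ?Y = "subtopology X (cU (A i) \<inter> cU (A j) \<inter> cU (A k))"
  have "continuous_map ?Y (arr G) (\<lambda>u. ker_part G (gammaA G A i j k u))"
    using continuous_map_compose[OF continuous_map_gammaA[OF assms] continuous_map_ker_part]
    by (simp add: o_def)
  then have "continuous_map ?Y (arr G) (eA G A i j k)"
    by (rule continuous_map_eq) (use eA_eq_ker_part assms in auto)
  then show ?thesis
    using eA_eq_ker_part gammaA_chart(1) ker_part_in_kerS assms
    by (auto simp: continuous_map_in_subtopology)
qed

end

theorem lemma9:
  fixes G :: "('x,'g) tgrp2" and X :: "'a topology" and P :: "('p,'q,'x,'g) gspace"
    and \<pi> :: "'p \<Rightarrow> 'a" and I :: "'i set" and A :: "'i \<Rightarrow> ('a,'p,'q,'x,'g) chart"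
  assumes "two_group G"
    and "g2space G P"
    and "bundle_functor X P \<pi>"
    and "is_atlas G X P \<pi> I A"
  shows "cech_cocycle G X I (\<lambda>i. cU (A i)) (xA G A) (eA G A)"
proof -
  interpret principal_2_bundle G X P \<pi> I A
    using assms by unfold_locales
  show ?thesis
    unfolding cech_cocycle_def
    by (simp add: continuous_map_xA continuous_map_eA tg_eA_cocycle eA_cocycle)
qed

end
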